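(* Let $A$ and $D$ be unital $C^*$-algebras and let $X$ be a right Hilbert $A$-module. Suppose $\rho:A\to D$ is a unital injective homomorphism, $V:X\to D$ is a linear map, and $\{u_i\}_{i=1}^n\subset X$, satisfying $V_\xi\rho(a)=V_{\xi a}$, $V_\xi^*V_\eta=\rho(\langle\xi,\eta\rangle_A)$ and $\sum_{i=1}^n V_{u_i}V_{u_i}^*=1$ for all $a\in A$ and $\xi,\eta\in X$. Then $V$ is injective and $\{u_i\}_{i=1}^n$ is a finite basis of $X$. Moreover, if $V_{u_i}^*V_{u_j}=\delta_{ij}1$ for all $i,j$, then $\{u_i\}_{i=1}^n$ is a finite orthonormal basis of $X$.
   Context: A finite set $\{u_i\}_{i=1}^n\subset X$ is a finite basis of $X$ if $\xi=\sum_{i=1}^n u_i\langle u_i,\xi\rangle_A$ for all $\xi\in X$; it is orthonormal if in addition $\langle u_i,u_j\rangle_A=\delta_{ij}1$ for all $i,j$. *)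

theory Defs
  imports "HOL-Analysis.Analysis"
begin

class scaleC =
  fixes scaleC :: "complex \<Rightarrow> 'a \<Rightarrow> 'a" (infixr \<open>*\<^sub>C\<close> 75)

class complex_vector = real_vector + scaleC +
  assumes scaleC_add_right: "c *\<^sub>C (x + y) = c *\<^sub>C x + c *\<^sub>C y"
    and scaleC_add_left: "(c + d) *\<^sub>C x = c *\<^sub>C x + d *\<^sub>C x"
    and scaleC_scaleC: "c *\<^sub>C (d *\<^sub>C x) = (c * d) *\<^sub>C x"
    and scaleC_one: "1 *\<^sub>C x = x"
    and scaleR_scaleC: "scaleR r x = complex_of_real r *\<^sub>C x"

class complex_algebra_1 = complex_vector + ring_1 +
  assumes mult_scaleC_left: "(c *\<^sub>C x) * y = c *\<^sub>C (x * y)"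
    and mult_scaleC_right: "x * (c *\<^sub>C y) = c *\<^sub>C (x * y)"

class unital_cstar_algebra = complex_algebra_1 + real_normed_algebra_1 + banach +
  fixes adj :: "'a \<Rightarrow> 'a"
  assumes norm_scaleC: "norm (c *\<^sub>C x) = cmod c * norm x"
    and adj_add: "adj (x + y) = adj x + adj y"
    and adj_scaleC: "adj (c *\<^sub>C x) = cnj c *\<^sub>C adj x"
    and adj_mult: "adj (x * y) = adj y * adj x"
    and adj_adj: "adj (adj x) = x"
    and cstar_identity: "norm (adj x * x) = (norm x)\<^sup>2"

definition cstar_positive :: "'a::unital_cstar_algebra \<Rightarrow> bool" where
  "cstar_positive a \<longleftrightarrow> (\<exists>b. a = adj b * b)"

definition unital_star_hom :: "('a::unital_cstar_algebra \<Rightarrow> 'd::unital_cstar_algebra) \<Rightarrow> bool" where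
  "unital_star_hom \<rho> \<longleftrightarrow>
     (\<forall>a b. \<rho> (a + b) = \<rho> a + \<rho> b) \<and>
     (\<forall>c a. \<rho> (c *\<^sub>C a) = c *\<^sub>C \<rho> a) \<and>
     (\<forall>a b. \<rho> (a * b) = \<rho> a * \<rho> b) \<and>
     (\<forall>a. \<rho> (adj a) = adj (\<rho> a)) \<and>
     \<rho> 1 = 1"

definition complex_linear :: "('x::complex_vector \<Rightarrow> 'y::complex_vector) \<Rightarrow> bool" where
  "complex_linear f \<longleftrightarrow> (\<forall>x y. f (x + y) = f x + f y) \<and> (\<forall>c x. f (c *\<^sub>C x) = c *\<^sub>C f x)"

text \<open>\<open>act\<close> is the right action \<open>\<xi> \<cdot> a\<close>, \<open>ip\<close> the \<open>A\<close>-valued inner product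
  \<open>\<langle>\<xi>,\<eta>\<rangle>\<^sub>A\<close>, linear in the second variable.\<close>

definition right_hilbert_module ::
  "('x::complex_vector \<Rightarrow> 'a::unital_cstar_algebra \<Rightarrow> 'x) \<Rightarrow> ('x \<Rightarrow> 'x \<Rightarrow> 'a) \<Rightarrow> bool" where
  "right_hilbert_module act ip \<longleftrightarrow>
     \<comment> \<open>right A-module structure compatible with the complex vector space structure\<close>
     (\<forall>\<xi> \<eta> a. act (\<xi> + \<eta>) a = act \<xi> a + act \<eta> a) \<and>
     (\<forall>\<xi> a b. act \<xi> (a + b) = act \<xi> a + act \<xi> b) \<and>
     (\<forall>\<xi> a b. act (act \<xi> a) b = act \<xi> (a * b)) \<and>
     (\<forall>\<xi> c a. act (c *\<^sub>C \<xi>) a = c *\<^sub>C act \<xi> a) \<and>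
     (\<forall>\<xi> c a. act \<xi> (c *\<^sub>C a) = c *\<^sub>C act \<xi> a) \<and>
     \<comment> \<open>A-valued inner product\<close>
     (\<forall>\<xi> \<eta> \<zeta>. ip \<xi> (\<eta> + \<zeta>) = ip \<xi> \<eta> + ip \<xi> \<zeta>) \<and>
     (\<forall>\<xi> \<eta> c. ip \<xi> (c *\<^sub>C \<eta>) = c *\<^sub>C ip \<xi> \<eta>) \<and>
     (\<forall>\<xi> \<eta> a. ip \<xi> (act \<eta> a) = ip \<xi> \<eta> * a) \<and>
     (\<forall>\<xi> \<eta>. adj (ip \<xi> \<eta>) = ip \<eta> \<xi>) \<and>
     (\<forall>\<xi>. cstar_positive (ip \<xi> \<xi>)) \<and>
     (\<forall>\<xi>. ip \<xi> \<xi> = 0 \<longrightarrow> \<xi> = 0) \<and>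
     \<comment> \<open>completeness for the norm \<open>\<parallel>\<xi>\<parallel> = \<parallel>\<langle>\<xi>,\<xi>\<rangle>\<parallel>\<^sup>1\<^sup>/\<^sup>2\<close>\<close>
     (\<forall>s :: nat \<Rightarrow> 'x.
        (\<forall>e>0. \<exists>N. \<forall>m\<ge>N. \<forall>k\<ge>N. sqrt (norm (ip (s m - s k) (s m - s k))) < e) \<longrightarrow>
        (\<exists>l. \<forall>e>0. \<exists>N. \<forall>m\<ge>N. sqrt (norm (ip (s m - l) (s m - l))) < e))"

definition finite_basis ::
  "('x \<Rightarrow> 'a \<Rightarrow> 'x::complex_vector) \<Rightarrow> ('x \<Rightarrow> 'x \<Rightarrow> 'a::unital_cstar_algebra) \<Rightarrow> (nat \<Rightarrow> 'x) \<Rightarrow> nat \<Rightarrow> bool" where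
  "finite_basis act ip u n \<longleftrightarrow> (\<forall>\<xi>. \<xi> = (\<Sum>i=1..n. act (u i) (ip (u i) \<xi>)))"

definition finite_orthonormal_basis ::
  "('x \<Rightarrow> 'a \<Rightarrow> 'x::complex_vector) \<Rightarrow> ('x \<Rightarrow> 'x \<Rightarrow> 'a::unital_cstar_algebra) \<Rightarrow> (nat \<Rightarrow> 'x) \<Rightarrow> nat \<Rightarrow> bool" where
  "finite_orthonormal_basis act ip u n \<longleftrightarrow>
     finite_basis act ip u n \<and>
     (\<forall>i\<in>{1..n}. \<forall>j\<in>{1..n}. ip (u i) (u j) = (if i = j then 1 else 0))"

end

theory Submission
  imports Defs
begin

text \<open>Since \<open>V \<xi>\<^sup>* V \<xi> = \<rho> \<langle>\<xi>,\<xi>\<rangle>\<close> with \<open>\<rho>\<close> injective and the inner product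
  definite, \<open>V\<close> has trivial kernel. Multiplying \<open>V \<xi>\<close> on the left by
  \<open>1 = \<Sum>\<^sub>i V u\<^sub>i (V u\<^sub>i)\<^sup>*\<close> and using both intertwining relations gives
  \<open>V \<xi> = V (\<Sum>\<^sub>i u\<^sub>i \<langle>u\<^sub>i,\<xi>\<rangle>)\<close>, so injectivity of \<open>V\<close> yields the basis expansion;
  orthonormality is pulled back along \<open>\<rho>\<close> in the same way.\<close>

lemma complex_linear_additive: "complex_linear f \<Longrightarrow> Modules.additive f"
  unfolding complex_linear_def by unfold_locales blast

lemma unital_star_hom_additive: "unital_star_hom \<rho> \<Longrightarrow> Modules.additive \<rho>"
  unfolding unital_star_hom_def by unfold_locales blast

lemma unital_star_hom_one: "unital_star_hom \<rho> \<Longrightarrow> \<rho> 1 = 1"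
  unfolding unital_star_hom_def by blast

lemma right_hilbert_module_ip_self_eq_0:
  "right_hilbert_module act ip \<Longrightarrow> ip \<xi> \<xi> = 0 \<Longrightarrow> \<xi> = 0"
  unfolding right_hilbert_module_def by blast

lemma inj_of_adj_mult_eq:
  fixes V :: "'x::ab_group_add \<Rightarrow> 'd::unital_cstar_algebra"
  assumes "Modules.additive V" and "inj \<rho>" and "\<rho> 0 = 0"
    and V_ip: "\<And>\<xi> \<eta>. adj (V \<xi>) * V \<eta> = \<rho> (ip \<xi> \<eta>)"
    and ip_definite: "\<And>\<xi>. ip \<xi> \<xi> = 0 \<Longrightarrow> \<xi> = 0"
  shows "inj V"
proof (rule injI)
  fix \<xi> \<eta> assume "V \<xi> = V \<eta>"
  then have "V (\<xi> - \<eta>) = 0"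
    by (simp add: additive.diff[OF \<open>Modules.additive V\<close>])
  then have "\<rho> (ip (\<xi> - \<eta>) (\<xi> - \<eta>)) = \<rho> 0"
    using V_ip \<open>\<rho> 0 = 0\<close> by (metis mult_zero_right)
  then have "ip (\<xi> - \<eta>) (\<xi> - \<eta>) = 0"
    by (rule injD[OF \<open>inj \<rho>\<close>])
  then have "\<xi> - \<eta> = 0"
    by (rule ip_definite)
  then show "\<xi> = \<eta>"
    by simp
qed

lemma finite_basis_of_row_isometry:
  assumes "inj V" and "Modules.additive V"
    and V_act: "\<And>\<xi> a. V \<xi> * \<rho> a = V (act \<xi> a)"
    and V_ip: "\<And>\<xi> \<eta>. adj (V \<xi>) * V \<eta> = \<rho> (ip \<xi> \<eta>)"
    and V_sum: "(\<Sum>i=1..n. V (u i) * adj (V (u i))) = 1"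
  shows "finite_basis act ip u n"
  unfolding finite_basis_def
proof
  fix \<xi>
  have "V \<xi> = (\<Sum>i=1..n. V (u i) * adj (V (u i))) * V \<xi>"
    using V_sum by simp
  also have "\<dots> = (\<Sum>i=1..n. V (u i) * (adj (V (u i)) * V \<xi>))"
    by (simp add: sum_distrib_right mult.assoc)
  also have "\<dots> = (\<Sum>i=1..n. V (act (u i) (ip (u i) \<xi>)))"
    using V_ip V_act by simp
  also have "\<dots> = V (\<Sum>i=1..n. act (u i) (ip (u i) \<xi>))"
    by (simp add: additive.sum[OF \<open>Modules.additive V\<close>])
  finally show "\<xi> = (\<Sum>i=1..n. act (u i) (ip (u i) \<xi>))"
    by (rule injD[OF \<open>inj V\<close>])
qed

lemma finite_orthonormal_basis_of_orthonormal_images: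
  assumes "finite_basis act ip u n" and "inj \<rho>" and "\<rho> 0 = 0" and "\<rho> 1 = 1"
    and V_ip: "\<And>\<xi> \<eta>. adj (V \<xi>) * V \<eta> = \<rho> (ip \<xi> \<eta>)"
    and orth: "\<forall>i\<in>{1..n}. \<forall>j\<in>{1..n}. adj (V (u i)) * V (u j) = (if i = j then 1 else 0)"
  shows "finite_orthonormal_basis act ip u n"
proof -
  have "ip (u i) (u j) = (if i = j then 1 else 0)" if "i \<in> {1..n}" "j \<in> {1..n}" for i j
  proof -
    have "\<rho> (ip (u i) (u j)) = \<rho> (if i = j then 1 else 0)"
      using orth that V_ip \<open>\<rho> 0 = 0\<close> \<open>\<rho> 1 = 1\<close> by (metis (full_types))
    then show ?thesis
      by (rule injD[OF \<open>inj \<rho>\<close>])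
  qed
  then show ?thesis
    using assms(1) unfolding finite_orthonormal_basis_def by blast
qed

theorem lemma2p4:
  fixes act :: "'x::complex_vector \<Rightarrow> 'a::unital_cstar_algebra \<Rightarrow> 'x"
    and ip :: "'x \<Rightarrow> 'x \<Rightarrow> 'a"
    and \<rho> :: "'a \<Rightarrow> 'd::unital_cstar_algebra"
    and V :: "'x \<Rightarrow> 'd"
    and u :: "nat \<Rightarrow> 'x"
    and n :: nat
  assumes X: "right_hilbert_module act ip"
    and rho_hom: "unital_star_hom \<rho>"
    and rho_inj: "inj \<rho>"
    and V_lin: "complex_linear V"
    and V_act: "\<forall>\<xi> a. V \<xi> * \<rho> a = V (act \<xi> a)"
    and V_ip: "\<forall>\<xi> \<eta>. adj (V \<xi>) * V \<eta> = \<rho> (ip \<xi> \<eta>)"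
    and V_sum: "(\<Sum>i=1..n. V (u i) * adj (V (u i))) = 1"
  shows "inj V \<and> finite_basis act ip u n \<and>
         ((\<forall>i\<in>{1..n}. \<forall>j\<in>{1..n}. adj (V (u i)) * V (u j) = (if i = j then 1 else 0))
            \<longrightarrow> finite_orthonormal_basis act ip u n)"
proof -
  have V_add: "Modules.additive V"
    using V_lin by (rule complex_linear_additive)
  have rho_0: "\<rho> 0 = 0"
    using rho_hom by (simp add: unital_star_hom_additive additive.zero)
  have inj_V: "inj V"
    using V_ip right_hilbert_module_ip_self_eq_0[OF X]
    by (intro inj_of_adj_mult_eq[OF V_add rho_inj rho_0]) auto
  have basis: "finite_basis act ip u n"
    using V_act V_ip by (intro finite_basis_of_row_isometry[OF inj_V V_add _ _ V_sum]) auto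
  moreover have "finite_orthonormal_basis act ip u n"
    if "\<forall>i\<in>{1..n}. \<forall>j\<in>{1..n}. adj (V (u i)) * V (u j) = (if i = j then 1 else 0)"
    using V_ip that unital_star_hom_one[OF rho_hom]
    by (intro finite_orthonormal_basis_of_orthonormal_images[OF basis rho_inj rho_0]) auto
  ultimately show ?thesis
    using inj_V by blast
qed

end
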